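(* Let $G$ be a graph, $f,p\ge 1$ integers, $\beta\ge0$. The graph $H$ returned by Algorithm 1 (described in the context), when $A_S$ is a $\beta$-additive $f$-EFT (resp. $f$-VFT) sourcewise spanner with respect to the computed source set $S$, is a $(\beta+2)$-additive $f$-EFT (resp. $f$-VFT) spanner of $G$: for every set $F$ of at most $f$ edges (resp. vertices) and all $s,t\in V(G)$ (not in $F$ in the vertex case) connected in $G-F$, $d_{H-F}(s,t)\le d_{G-F}(s,t)+\beta+2$.
   Context: $d_X(u,v)$ is the shortest-path distance in $X$; $X-F$ removes the edges (resp. the vertices and their incident edges) in $F$. Algorithm 1 (input: graph $G$, integers $f,p\ge1$, and a value $\beta$). Initially every vertex is colored white and has $\mathrm{counter}(v)=f+1$; $S=\emptyset$, $E'=\emptyset$. For a vertex $u$, let $N_w(u)$ be the set of currently white neighbors of $u$ and $\delta_w(u)=|N_w(u)|$. While there exists $s\in V\setminus S$ with $\delta_w(s)\ge p$: add $s$ to $S$, color $s$ red, and for each $u\in N_w(s)$ decrement $\mathrm{counter}(u)$, add edge $(s,u)$ to $E'$, and if $\mathrm{counter}(u)=0$ color $u$ black. After the loop, add to $E'$ every edge $(u,v)\in E(G)$ such that $u$ is white. Let $A_S$ be a $\beta$-additive $f$-EFT (resp. $f$-VFT) sourcewise spanner of $G$ with respect to $S$, i.e. a subgraph such that for every set $F$ of at most $f$ edges (resp. vertices) and every $s\in S$, $v\in V(G)$, $d_{A_S-F}(s,v)\le d_{G-F}(s,v)+\beta$. Return $H=(V(G),E'\cup E(A_S))$. *)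

theory Defs
  imports Main "HOL-Library.Extended_Real"
begin

definition simple_graph :: "'a set \<Rightarrow> 'a set set \<Rightarrow> bool" where
  "simple_graph V E \<longleftrightarrow> finite V \<and> (\<forall>e\<in>E. \<exists>u v. e = {u, v} \<and> u \<in> V \<and> v \<in> V \<and> u \<noteq> v)"

definition walk :: "'a set \<Rightarrow> 'a set set \<Rightarrow> 'a list \<Rightarrow> bool" where
  "walk V E w \<longleftrightarrow> w \<noteq> [] \<and> set w \<subseteq> V \<and> (\<forall>i. Suc i < length w \<longrightarrow> {w ! i, w ! Suc i} \<in> E)"

text \<open>Shortest-path distance; infinite if no path (in particular if an endpoint is not a vertex).\<close>
definition dist :: "'a set \<Rightarrow> 'a set set \<Rightarrow> 'a \<Rightarrow> 'a \<Rightarrow> enat" where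
  "dist V E u v = (INF w \<in> {w. walk V E w \<and> hd w = u \<and> last w = v}. enat (length w - 1))"

definition del_edges :: "'a set set \<Rightarrow> 'a set set \<Rightarrow> 'a set set" where
  "del_edges E F = E - F"

definition del_verts_V :: "'a set \<Rightarrow> 'a set \<Rightarrow> 'a set" where
  "del_verts_V V F = V - F"

definition del_verts_E :: "'a set set \<Rightarrow> 'a set \<Rightarrow> 'a set set" where
  "del_verts_E E F = {e \<in> E. e \<inter> F = {}}"

definition Nw :: "'a set set \<Rightarrow> 'a set \<Rightarrow> 'a \<Rightarrow> 'a set" where
  "Nw E W u = {v \<in> W. {u, v} \<in> E}"

text \<open>Reachable states (S, W = white vertices, counter, E') of the while loop of Algorithm 1.
  Red vertices are exactly those in S; black vertices are those neither white nor in S.\<close>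
inductive alg1_reach :: "'a set \<Rightarrow> 'a set set \<Rightarrow> nat \<Rightarrow> nat \<Rightarrow>
    'a set \<Rightarrow> 'a set \<Rightarrow> ('a \<Rightarrow> nat) \<Rightarrow> 'a set set \<Rightarrow> bool"
  for V E f p where
  init: "alg1_reach V E f p {} V (\<lambda>_. f + 1) {}"
| step: "\<lbrakk> alg1_reach V E f p S W c E'; s \<in> V - S; card (Nw E W s) \<ge> p;
          c' = (\<lambda>u. if u \<in> Nw E W s then c u - 1 else c u) \<rbrakk>
        \<Longrightarrow> alg1_reach V E f p (insert s S) ((W - {s}) - {u \<in> Nw E W s. c' u = 0}) c'
              (E' \<union> {{s, u} | u. u \<in> Nw E W s})"

text \<open>Possible outputs (S, E') of Algorithm 1 (any choice of s in the loop), where E'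
  includes all edges with a white endpoint added after the loop.\<close>
definition alg1_output :: "'a set \<Rightarrow> 'a set set \<Rightarrow> nat \<Rightarrow> nat \<Rightarrow> 'a set \<Rightarrow> 'a set set \<Rightarrow> bool" where
  "alg1_output V E f p S Eout \<longleftrightarrow>
     (\<exists>W c E'. alg1_reach V E f p S W c E' \<and> (\<forall>s \<in> V - S. card (Nw E W s) < p)
        \<and> Eout = E' \<union> {e \<in> E. e \<inter> W \<noteq> {}})"

definition EFT_sourcewise_spanner :: "'a set \<Rightarrow> 'a set set \<Rightarrow> 'a set set \<Rightarrow> 'a set \<Rightarrow> nat \<Rightarrow> real \<Rightarrow> bool" where
  "EFT_sourcewise_spanner V E A S f \<beta> \<longleftrightarrow> A \<subseteq> E \<and>
     (\<forall>F. F \<subseteq> E \<and> card F \<le> f \<longrightarrow> (\<forall>s\<in>S. \<forall>v\<in>V.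
        ereal_of_enat (dist V (del_edges A F) s v) \<le> ereal_of_enat (dist V (del_edges E F) s v) + ereal \<beta>))"

definition VFT_sourcewise_spanner :: "'a set \<Rightarrow> 'a set set \<Rightarrow> 'a set set \<Rightarrow> 'a set \<Rightarrow> nat \<Rightarrow> real \<Rightarrow> bool" where
  "VFT_sourcewise_spanner V E A S f \<beta> \<longleftrightarrow> A \<subseteq> E \<and>
     (\<forall>F. F \<subseteq> V \<and> card F \<le> f \<longrightarrow> (\<forall>s\<in>S. \<forall>v\<in>V.
        ereal_of_enat (dist (del_verts_V V F) (del_verts_E A F) s v)
          \<le> ereal_of_enat (dist (del_verts_V V F) (del_verts_E E F) s v) + ereal \<beta>))"

definition EFT_spanner :: "'a set \<Rightarrow> 'a set set \<Rightarrow> 'a set set \<Rightarrow> nat \<Rightarrow> real \<Rightarrow> bool" where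
  "EFT_spanner V E H f \<beta> \<longleftrightarrow> H \<subseteq> E \<and>
     (\<forall>F. F \<subseteq> E \<and> card F \<le> f \<longrightarrow> (\<forall>s\<in>V. \<forall>t\<in>V.
        dist V (del_edges E F) s t \<noteq> \<infinity> \<longrightarrow>
        ereal_of_enat (dist V (del_edges H F) s t) \<le> ereal_of_enat (dist V (del_edges E F) s t) + ereal \<beta>))"

definition VFT_spanner :: "'a set \<Rightarrow> 'a set set \<Rightarrow> 'a set set \<Rightarrow> nat \<Rightarrow> real \<Rightarrow> bool" where
  "VFT_spanner V E H f \<beta> \<longleftrightarrow> H \<subseteq> E \<and>
     (\<forall>F. F \<subseteq> V \<and> card F \<le> f \<longrightarrow> (\<forall>s\<in>V - F. \<forall>t\<in>V - F.
        dist (del_verts_V V F) (del_verts_E E F) s t \<noteq> \<infinity> \<longrightarrow>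
        ereal_of_enat (dist (del_verts_V V F) (del_verts_E H F) s t)
          \<le> ereal_of_enat (dist (del_verts_V V F) (del_verts_E E F) s t) + ereal \<beta>))"

end

theory Submission
  imports Defs
begin

text \<open>Take a shortest path from t to s in G - F. If all its edges survive in H - F we are done.
  Otherwise let y be the first vertex at which the path uses an edge missing from H. That edge
  is not in E', so y was not white when Algorithm 1 stopped: either y is a source itself, or it
  was joined by edges of E' to f + 1 distinct sources, and the at most f faults leave one of
  these joins, to a source \<sigma>, intact. Routing through \<sigma> and using the sourcewise spanner
  from \<sigma> to s gives, with all distances taken in G - F and H - F,
  d_H(s,t) \<le> d_H(\<sigma>,s) + 1 + d_H(y,t) \<le> d_G(\<sigma>,s) + \<beta> + 1 + d_G(y,t) \<le> d_G(s,t) + \<beta> + 2,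
  since d_G(\<sigma>,s) \<le> 1 + d_G(y,s) and y lies on a shortest s-t path.\<close>

lemma walk_Nil [simp]: "\<not> walk V E []"
  by (simp add: walk_def)

lemma walk_single [simp]: "walk V E [x] \<longleftrightarrow> x \<in> V"
  by (simp add: walk_def)

lemma walk_Cons_Cons [simp]:
  "walk V E (x # y # ws) \<longleftrightarrow> x \<in> V \<and> {x, y} \<in> E \<and> walk V E (y # ws)"
  by (auto simp: walk_def less_Suc_eq_0_disj)

lemma walk_set_subset: "walk V E w \<Longrightarrow> set w \<subseteq> V"
  by (simp add: walk_def)

lemma walk_append:
  assumes "walk V E w1" "walk V E w2" "last w1 = hd w2"
  shows "walk V E (w1 @ tl w2)"
  using assms by (induction w1 rule: induct_list012) (cases w2; auto)+

lemma walk_rev: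
  assumes "walk V E w"
  shows "walk V E (rev w)"
  using assms
proof (induction w rule: induct_list012)
  case (3 x y zs)
  then have "walk V E (rev zs @ [y])" "walk V E [y, x]"
    using walk_set_subset[of V E "y # zs"] by (auto simp: insert_commute)
  from walk_append[OF this] show ?case by simp
qed simp_all

lemma dist_le_walk: "walk V E w \<Longrightarrow> dist V E (hd w) (last w) \<le> enat (length w - 1)"
  unfolding dist_def by (rule INF_lower) auto

lemma dist_attained:
  assumes "dist V E u v \<noteq> \<infinity>"
  obtains w where "walk V E w" "hd w = u" "last w = v" "dist V E u v = enat (length w - 1)"
proof -
  let ?W = "{w. walk V E w \<and> hd w = u \<and> last w = v}"
  have "?W \<noteq> {}"
    using assms by (auto simp: dist_def top_enat_def[symmetric])
  then have "Inf ((\<lambda>w. enat (length w - 1)) ` ?W) \<in> (\<lambda>w. enat (length w - 1)) ` ?W"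
    unfolding Inf_enat_def by (auto intro: LeastI)
  then show ?thesis
    using that unfolding dist_def by auto
qed

lemma dist_self: "v \<in> V \<Longrightarrow> dist V E v v = 0"
  using dist_le_walk[of V E "[v]"] by (simp add: zero_enat_def[symmetric])

lemma dist_edge: "{u, v} \<in> E \<Longrightarrow> u \<in> V \<Longrightarrow> v \<in> V \<Longrightarrow> dist V E u v \<le> 1"
  using dist_le_walk[of V E "[u, v]"] by (simp add: one_enat_def)

lemma dist_triangle: "dist V E u w \<le> dist V E u v + dist V E v w"
proof (cases "dist V E u v = \<infinity> \<or> dist V E v w = \<infinity>")
  case False
  then obtain w1 w2
    where w1: "walk V E w1" "hd w1 = u" "last w1 = v" "dist V E u v = enat (length w1 - 1)"
      and w2: "walk V E w2" "hd w2 = v" "last w2 = w" "dist V E v w = enat (length w2 - 1)"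
    by (metis dist_attained)
  have "dist V E u w \<le> enat (length (w1 @ tl w2) - 1)"
    using dist_le_walk[OF walk_append[OF w1(1) w2(1)]] w1 w2 by (cases w1; cases w2) auto
  then show ?thesis
    using w1 w2 by (cases w1; cases w2) auto
qed auto

lemma dist_sym: "dist V E u v = dist V E v u"
proof -
  have "dist V E u v \<le> dist V E v u" for u v
  proof (cases "dist V E v u = \<infinity>")
    case False
    then obtain w where w: "walk V E w" "hd w = v" "last w = u" "dist V E v u = enat (length w - 1)"
      by (rule dist_attained)
    then show ?thesis
      using dist_le_walk[OF walk_rev[OF w(1)]] by (cases w) (auto simp: hd_rev last_rev)
  qed simp
  then show ?thesis
    by (metis order_antisym)
qed

lemma dist_antimono: "E1 \<subseteq> E2 \<Longrightarrow> dist V E2 u v \<le> dist V E1 u v"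
  unfolding dist_def by (rule INF_superset_mono) (auto simp: walk_def)

(* y is the first vertex of w at which w leaves H *)
lemma walk_split_at_missing_edge:
  assumes "walk V E w"
    and missing: "\<And>x y. {x, y} \<in> E \<Longrightarrow> {x, y} \<notin> H \<Longrightarrow> x \<in> V \<Longrightarrow> P x"
  shows "dist V H (hd w) (last w) \<le> enat (length w - 1) \<or>
    (\<exists>y\<in>V. P y \<and> dist V H (hd w) y + dist V E y (last w) \<le> enat (length w - 1))"
  using assms(1)
proof (induction w rule: induct_list012)
  case (3 x y zs)
  then have xy: "x \<in> V" "y \<in> V" "{x, y} \<in> E" and walk: "walk V E (y # zs)"
    using walk_set_subset[of V E "y # zs"] by auto
  let ?n = "enat (length (y # zs) - 1)"
  have len: "enat (length (x # y # zs) - 1) = 1 + ?n"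
    by (simp add: one_enat_def)
  show ?case
  proof (cases "{x, y} \<in> H")
    case True
    have via_y: "dist V H x v \<le> 1 + dist V H y v" for v
    proof -
      have "dist V H x v \<le> dist V H x y + dist V H y v"
        by (rule dist_triangle)
      also have "\<dots> \<le> 1 + dist V H y v"
        using dist_edge[OF True xy(1,2)] by (rule add_right_mono)
      finally show ?thesis .
    qed
    from "3.IH"(2)[OF walk] show ?thesis
    proof
      assume "dist V H (hd (y # zs)) (last (y # zs)) \<le> ?n"
      then have "1 + dist V H y (last (y # zs)) \<le> 1 + ?n"
        by (simp add: add_left_mono)
      with via_y have "dist V H x (last (y # zs)) \<le> 1 + ?n"
        by (rule order_trans)
      then show ?thesis
        using len by simp
    next
      assume "\<exists>y'\<in>V. P y' \<and> dist V H (hd (y # zs)) y' + dist V E y' (last (y # zs)) \<le> ?n"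
      then obtain y' where y': "y' \<in> V" "P y'" "dist V H y y' + dist V E y' (last (y # zs)) \<le> ?n"
        by auto
      have "dist V H x y' + dist V E y' (last (y # zs)) \<le> 1 + (dist V H y y' + dist V E y' (last (y # zs)))"
        using add_right_mono[OF via_y[of y']] by (simp add: add.assoc)
      also have "\<dots> \<le> 1 + ?n"
        using y'(3) by (rule add_left_mono)
      finally have "dist V H x y' + dist V E y' (last (y # zs)) \<le> enat (length (x # y # zs) - 1)"
        using len by simp
      then show ?thesis
        using y'(1,2) by auto
    qed
  next
    case False
    then have "P x"
      using missing xy by blast
    then show ?thesis
      using dist_le_walk[OF "3.prems"] xy(1) by (auto simp: dist_self)
  qed
qed (simp_all add: dist_self)

lemma dist_detour_via_source:
  fixes \<beta> :: real
  assumes "H \<subseteq> E" "\<sigma> \<in> V" "y \<in> V" "\<sigma> = y \<or> {\<sigma>, y} \<in> H"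
    and sourcewise: "ereal_of_enat (dist V H \<sigma> s) \<le> ereal_of_enat (dist V E \<sigma> s) + ereal \<beta>"
  shows "ereal_of_enat (dist V H s t)
    \<le> ereal_of_enat (dist V H t y + dist V E y s) + ereal (\<beta> + 2)"
proof -
  let ?D = "dist V H t y + dist V E y s"
  have near: "dist V H \<sigma> y \<le> 1" "dist V E \<sigma> y \<le> 1"
    using assms(1-4) by (auto simp: dist_self dist_edge)
  have via_\<sigma>: "dist V H s t \<le> dist V H \<sigma> s + (1 + dist V H y t)"
  proof -
    have "dist V H s t \<le> dist V H s \<sigma> + (dist V H \<sigma> y + dist V H y t)"
      using dist_triangle[of V H s t \<sigma>] dist_triangle[of V H \<sigma> t y]
      by (meson add_left_mono order_trans)
    also have "\<dots> \<le> dist V H \<sigma> s + (1 + dist V H y t)"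
      using near(1) by (simp add: dist_sym[of V H s] add_left_mono add_right_mono)
    finally show ?thesis .
  qed
  have detour: "dist V E \<sigma> s + (1 + dist V H y t) \<le> ?D + 2"
  proof -
    have "dist V E \<sigma> s \<le> dist V E \<sigma> y + dist V E y s"
      by (rule dist_triangle)
    also have "\<dots> \<le> 1 + dist V E y s"
      using near(2) by (rule add_right_mono)
    finally have "dist V E \<sigma> s + (1 + dist V H y t) \<le> (1 + dist V E y s) + (1 + dist V H y t)"
      by (rule add_right_mono)
    also have "\<dots> = ?D + (1 + 1)"
      by (simp add: dist_sym[of V H y t] ac_simps)
    finally show ?thesis
      by simp
  qed
  have "ereal_of_enat (dist V H s t) \<le> ereal_of_enat (dist V H \<sigma> s) + ereal_of_enat (1 + dist V H y t)"
    using via_\<sigma> by (simp add: ereal_of_enat_add[symmetric])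
  also have "\<dots> \<le> ereal_of_enat (dist V E \<sigma> s) + ereal \<beta> + ereal_of_enat (1 + dist V H y t)"
    using sourcewise by (rule add_right_mono)
  also have "\<dots> = ereal_of_enat (dist V E \<sigma> s + (1 + dist V H y t)) + ereal \<beta>"
    by (simp add: ereal_of_enat_add ac_simps)
  also have "\<dots> \<le> ereal_of_enat (?D + 2) + ereal \<beta>"
    using detour by (intro add_right_mono) simp
  also have "\<dots> = ereal_of_enat ?D + (ereal 2 + ereal \<beta>)"
    by (simp add: ereal_of_enat_add numeral_eq_enat add.assoc)
  also have "\<dots> = ereal_of_enat ?D + ereal (\<beta> + 2)"
    by (simp add: add.commute)
  finally show ?thesis .
qed

lemma additive_spanner_via_sources:
  fixes \<beta> :: real
  assumes "H \<subseteq> E" and "\<beta> \<ge> 0"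
    and near_source: "\<And>x y. {x, y} \<in> E \<Longrightarrow> {x, y} \<notin> H \<Longrightarrow> x \<in> V \<Longrightarrow>
        \<exists>\<sigma>\<in>S \<inter> V. \<sigma> = x \<or> {\<sigma>, x} \<in> H"
    and sourcewise: "\<And>\<sigma> v. \<sigma> \<in> S \<Longrightarrow> \<sigma> \<in> V \<Longrightarrow> v \<in> V \<Longrightarrow>
        ereal_of_enat (dist V H \<sigma> v) \<le> ereal_of_enat (dist V E \<sigma> v) + ereal \<beta>"
  shows "ereal_of_enat (dist V H s t) \<le> ereal_of_enat (dist V E s t) + ereal (\<beta> + 2)"
proof (cases "dist V E s t = \<infinity>")
  case False
  let ?d = "dist V E s t"
  have "dist V E t s \<noteq> \<infinity>"
    using False by (simp add: dist_sym)
  then obtain w where w: "walk V E w" "hd w = t" "last w = s" "dist V E t s = enat (length w - 1)"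
    by (rule dist_attained)
  then have len: "?d = enat (length w - 1)"
    by (simp add: dist_sym)
  have s: "s \<in> V"
    using walk_set_subset[OF w(1)] w(1,3) by (cases w rule: rev_cases) auto
  have "dist V H t s \<le> ?d \<or>
    (\<exists>y\<in>V. (\<exists>\<sigma>\<in>S \<inter> V. \<sigma> = y \<or> {\<sigma>, y} \<in> H) \<and> dist V H t y + dist V E y s \<le> ?d)"
    using walk_split_at_missing_edge[OF w(1) near_source] w len by simp
  then show ?thesis
  proof
    assume "dist V H t s \<le> ?d"
    then have "ereal_of_enat (dist V H s t) \<le> ereal_of_enat ?d + 0"
      by (simp add: dist_sym)
    also have "\<dots> \<le> ereal_of_enat ?d + ereal (\<beta> + 2)"
      using \<open>\<beta> \<ge> 0\<close> by (intro add_left_mono) simp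
    finally show ?thesis .
  next
    assume "\<exists>y\<in>V. (\<exists>\<sigma>\<in>S \<inter> V. \<sigma> = y \<or> {\<sigma>, y} \<in> H) \<and> dist V H t y + dist V E y s \<le> ?d"
    then obtain y \<sigma> where y: "y \<in> V" "\<sigma> \<in> S" "\<sigma> \<in> V" "\<sigma> = y \<or> {\<sigma>, y} \<in> H"
      and path: "dist V H t y + dist V E y s \<le> ?d"
      by blast
    have "ereal_of_enat (dist V H s t)
        \<le> ereal_of_enat (dist V H t y + dist V E y s) + ereal (\<beta> + 2)"
      using dist_detour_via_source[OF \<open>H \<subseteq> E\<close> y(3,1,4) sourcewise[OF y(2,3) s]] .
    also have "\<dots> \<le> ereal_of_enat ?d + ereal (\<beta> + 2)"
      using path by (intro add_right_mono) simp
    finally show ?thesis .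
  qed
qed simp

lemma exists_image_notin:
  assumes "inj_on g K" "finite F" "card F < card K"
  shows "\<exists>k\<in>K. g k \<notin> F"
  using card_inj_on_le[OF assms(1) _ assms(2)] assms(3) by fastforce

(* Each decrement of counter(u) adds a new source here, so a black vertex has f + 1 of them. *)
definition linked_sources :: "'a set \<Rightarrow> 'a set set \<Rightarrow> 'a \<Rightarrow> 'a set" where
  "linked_sources S E' u = {s \<in> S. {s, u} \<in> E'}"

lemma alg1_reach_subsets: "alg1_reach V E f p S W c E' \<Longrightarrow> S \<subseteq> V \<and> W \<subseteq> V \<and> E' \<subseteq> E"
  by (induction rule: alg1_reach.induct) (auto simp: Nw_def)

lemma alg1_reach_nonwhite:
  "alg1_reach V E f p S W c E' \<Longrightarrow> u \<in> V \<Longrightarrow> u \<notin> W \<Longrightarrow> u \<in> S \<or> c u = 0"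
  by (induction rule: alg1_reach.induct) (auto simp: Nw_def)

lemma alg1_reach_counter:
  assumes "alg1_reach V E f p S W c E'" "finite V"
  shows "f + 1 - c u \<le> card (linked_sources S E' u)"
  using assms(1)
proof (induction rule: alg1_reach.induct)
  case (step S W c E' s c')
  let ?L = "linked_sources S E' u"
    and ?L' = "linked_sources (insert s S) (E' \<union> {{s, v} |v. v \<in> Nw E W s}) u"
  have finS: "finite (insert s S)"
    using alg1_reach_subsets[OF step.hyps(1)] step.hyps(2) assms(2) finite_subset by blast
  have "?L \<subseteq> insert s S" "?L' \<subseteq> insert s S"
    by (auto simp: linked_sources_def)
  then have fin: "finite ?L" "finite ?L'"
    using finS finite_subset by blast+
  show ?case
  proof (cases "u \<in> Nw E W s")
    case True
    have new: "insert s ?L \<subseteq> ?L'" "s \<notin> ?L"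
      using True step.hyps(2) by (auto simp: linked_sources_def)
    have card_L': "card ?L + 1 \<le> card ?L'"
      using card_mono[OF fin(2) new(1)] card_insert_disjoint[OF fin(1) new(2)] by simp
    have "f + 1 - c' u \<le> (f + 1 - c u) + 1"
      using step.hyps(4) True by simp
    also have "\<dots> \<le> card ?L + 1"
      using step.IH by simp
    finally show ?thesis
      using card_L' by (rule order_trans)
  next
    case False
    then have "f + 1 - c' u = f + 1 - c u"
      using step.hyps(4) by simp
    also have "\<dots> \<le> card ?L"
      by (rule step.IH)
    also have "\<dots> \<le> card ?L'"
      using fin(2) by (rule card_mono) (auto simp: linked_sources_def)
    finally show ?thesis .
  qed
qed simp

lemma alg1_output_subsets: "alg1_output V E f p S E' \<Longrightarrow> S \<subseteq> V \<and> E' \<subseteq> E"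
  unfolding alg1_output_def using alg1_reach_subsets by blast

lemma alg1_output_missing_edge:
  assumes "alg1_output V E f p S E'" "finite V"
    and "{x, y} \<in> E" "{x, y} \<notin> E'" "x \<in> V"
  shows "x \<in> S \<or> f + 1 \<le> card (linked_sources S E' x)"
proof -
  obtain W c E0 where reach: "alg1_reach V E f p S W c E0"
    and E': "E' = E0 \<union> {e \<in> E. e \<inter> W \<noteq> {}}"
    using assms(1) unfolding alg1_output_def by blast
  have "x \<notin> W"
    using assms(3,4) E' by blast
  then have "x \<in> S \<or> c x = 0"
    by (rule alg1_reach_nonwhite[OF reach assms(5)])
  moreover have "f + 1 \<le> card (linked_sources S E' x)" if "c x = 0"
  proof -
    have "finite S"
      using alg1_reach_subsets[OF reach] assms(2) finite_subset by blast
    then have "card (linked_sources S E0 x) \<le> card (linked_sources S E' x)"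
      by (intro card_mono) (auto simp: linked_sources_def E')
    then show ?thesis
      using alg1_reach_counter[OF reach assms(2), of x] that by simp
  qed
  ultimately show ?thesis
    by blast
qed

lemma EFT_spanner_of_alg1_output:
  assumes "simple_graph V E" "\<beta> \<ge> 0" "alg1_output V E f p S E'"
    and A: "EFT_sourcewise_spanner V E A S f \<beta>"
  shows "EFT_spanner V E (E' \<union> A) f (\<beta> + 2)"
  unfolding EFT_spanner_def
proof (intro conjI allI impI ballI)
  have finV: "finite V" and "finite E"
    using assms(1) unfolding simple_graph_def by (auto intro: finite_subset[of E "Pow V"])
  have "S \<subseteq> V" "E' \<subseteq> E" "A \<subseteq> E"
    using alg1_output_subsets[OF assms(3)] A by (auto simp: EFT_sourcewise_spanner_def)
  then show "E' \<union> A \<subseteq> E"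
    by blast
  fix F s t
  assume F: "F \<subseteq> E \<and> card F \<le> f"
  then have "finite F"
    using \<open>finite E\<close> finite_subset by blast
  show "ereal_of_enat (dist V (del_edges (E' \<union> A) F) s t)
      \<le> ereal_of_enat (dist V (del_edges E F) s t) + ereal (\<beta> + 2)"
  proof (rule additive_spanner_via_sources[OF _ \<open>\<beta> \<ge> 0\<close>])
    show "del_edges (E' \<union> A) F \<subseteq> del_edges E F"
      using \<open>E' \<union> A \<subseteq> E\<close> by (auto simp: del_edges_def)
  next
    fix x y
    assume xy: "{x, y} \<in> del_edges E F" "{x, y} \<notin> del_edges (E' \<union> A) F" "x \<in> V"
    then have "x \<in> S \<or> f + 1 \<le> card (linked_sources S E' x)"
      using alg1_output_missing_edge[OF assms(3) finV] by (auto simp: del_edges_def)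
    then show "\<exists>\<sigma>\<in>S \<inter> V. \<sigma> = x \<or> {\<sigma>, x} \<in> del_edges (E' \<union> A) F"
    proof
      assume "f + 1 \<le> card (linked_sources S E' x)"
      then have "card F < card (linked_sources S E' x)"
        using F by linarith
      moreover have "inj_on (\<lambda>\<sigma>. {\<sigma>, x}) (linked_sources S E' x)"
        by (auto simp: inj_on_def doubleton_eq_iff)
      ultimately obtain \<sigma> where "\<sigma> \<in> linked_sources S E' x" "{\<sigma>, x} \<notin> F"
        using exists_image_notin \<open>finite F\<close> by blast
      then show ?thesis
        using \<open>S \<subseteq> V\<close> by (auto simp: linked_sources_def del_edges_def)
    qed (use xy(3) in blast)
  next
    fix \<sigma> v
    assume "\<sigma> \<in> S" "\<sigma> \<in> V" "v \<in> V"
    have "dist V (del_edges (E' \<union> A) F) \<sigma> v \<le> dist V (del_edges A F) \<sigma> v"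
      by (rule dist_antimono) (auto simp: del_edges_def)
    then have "ereal_of_enat (dist V (del_edges (E' \<union> A) F) \<sigma> v)
        \<le> ereal_of_enat (dist V (del_edges A F) \<sigma> v)"
      by simp
    also have "ereal_of_enat (dist V (del_edges A F) \<sigma> v) \<le> ereal_of_enat (dist V (del_edges E F) \<sigma> v) + ereal \<beta>"
      using A F \<open>\<sigma> \<in> S\<close> \<open>v \<in> V\<close> unfolding EFT_sourcewise_spanner_def by blast
    finally show "ereal_of_enat (dist V (del_edges (E' \<union> A) F) \<sigma> v)
        \<le> ereal_of_enat (dist V (del_edges E F) \<sigma> v) + ereal \<beta>"
      .
  qed
qed

lemma VFT_spanner_of_alg1_output:
  assumes "simple_graph V E" "\<beta> \<ge> 0" "alg1_output V E f p S E'"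
    and A: "VFT_sourcewise_spanner V E A S f \<beta>"
  shows "VFT_spanner V E (E' \<union> A) f (\<beta> + 2)"
  unfolding VFT_spanner_def
proof (intro conjI allI impI ballI)
  have finV: "finite V"
    using assms(1) by (simp add: simple_graph_def)
  have "S \<subseteq> V" "E' \<subseteq> E" "A \<subseteq> E"
    using alg1_output_subsets[OF assms(3)] A by (auto simp: VFT_sourcewise_spanner_def)
  then show "E' \<union> A \<subseteq> E"
    by blast
  fix F s t
  assume F: "F \<subseteq> V \<and> card F \<le> f"
  then have "finite F"
    using finV finite_subset by blast
  show "ereal_of_enat (dist (del_verts_V V F) (del_verts_E (E' \<union> A) F) s t)
      \<le> ereal_of_enat (dist (del_verts_V V F) (del_verts_E E F) s t) + ereal (\<beta> + 2)"
  proof (rule additive_spanner_via_sources[OF _ \<open>\<beta> \<ge> 0\<close>])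
    show "del_verts_E (E' \<union> A) F \<subseteq> del_verts_E E F"
      using \<open>E' \<union> A \<subseteq> E\<close> by (auto simp: del_verts_E_def)
  next
    fix x y
    assume xy: "{x, y} \<in> del_verts_E E F" "{x, y} \<notin> del_verts_E (E' \<union> A) F"
      "x \<in> del_verts_V V F"
    then have "x \<in> S \<or> f + 1 \<le> card (linked_sources S E' x)"
      using alg1_output_missing_edge[OF assms(3) finV]
      by (auto simp: del_verts_E_def del_verts_V_def)
    then show "\<exists>\<sigma>\<in>S \<inter> del_verts_V V F. \<sigma> = x \<or> {\<sigma>, x} \<in> del_verts_E (E' \<union> A) F"
    proof
      assume "f + 1 \<le> card (linked_sources S E' x)"
      then have "card F < card (linked_sources S E' x)"
        using F by linarith
      then obtain \<sigma> where "\<sigma> \<in> linked_sources S E' x" "\<sigma> \<notin> F"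
        using exists_image_notin[of id] \<open>finite F\<close> by auto
      then show ?thesis
        using \<open>S \<subseteq> V\<close> xy(3) by (auto simp: linked_sources_def del_verts_E_def del_verts_V_def)
    qed (use xy(3) in blast)
  next
    fix \<sigma> v
    assume "\<sigma> \<in> S" "v \<in> del_verts_V V F"
    have "dist (del_verts_V V F) (del_verts_E (E' \<union> A) F) \<sigma> v
        \<le> dist (del_verts_V V F) (del_verts_E A F) \<sigma> v"
      by (rule dist_antimono) (auto simp: del_verts_E_def)
    then have "ereal_of_enat (dist (del_verts_V V F) (del_verts_E (E' \<union> A) F) \<sigma> v)
        \<le> ereal_of_enat (dist (del_verts_V V F) (del_verts_E A F) \<sigma> v)"
      by simp
    also have "\<dots> \<le> ereal_of_enat (dist (del_verts_V V F) (del_verts_E E F) \<sigma> v) + ereal \<beta>"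
      using A F \<open>\<sigma> \<in> S\<close> \<open>v \<in> del_verts_V V F\<close>
      unfolding VFT_sourcewise_spanner_def del_verts_V_def by blast
    finally show "ereal_of_enat (dist (del_verts_V V F) (del_verts_E (E' \<union> A) F) \<sigma> v)
        \<le> ereal_of_enat (dist (del_verts_V V F) (del_verts_E E F) \<sigma> v) + ereal \<beta>" .
  qed
qed

theorem theorem2:
  fixes V :: "'a set" and E :: "'a set set" and f p :: nat and \<beta> :: real
    and S :: "'a set" and E' :: "'a set set"
  assumes "simple_graph V E" and "f \<ge> 1" and "p \<ge> 1" and "\<beta> \<ge> 0"
    and "alg1_output V E f p S E'"
  shows "(\<forall>A. EFT_sourcewise_spanner V E A S f \<beta> \<longrightarrow> EFT_spanner V E (E' \<union> A) f (\<beta> + 2))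
       \<and> (\<forall>A. VFT_sourcewise_spanner V E A S f \<beta> \<longrightarrow> VFT_spanner V E (E' \<union> A) f (\<beta> + 2))"
  using EFT_spanner_of_alg1_output[OF assms(1,4,5)] VFT_spanner_of_alg1_output[OF assms(1,4,5)]
  by blast

end
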